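(* Let $\mathcal{H}=\operatorname{coh}\mathbb{X}$ for a weighted projective line of weight type $(p_1,\ldots,p_t)$, and let $y\in K_0(\mathcal{H})$. The linear form $\lambda=\langle y,-\rangle:K_0(\mathcal{H})\to\mathbb{Z}$ satisfies $\lambda\circ(1+\Phi)=0$ if and only if $\Phi y=-y$. In this case $\operatorname{rk}(y)=0$ and $\deg(y)=0$.
   Context: $k$ is algebraically closed; $\mathcal{H}=\operatorname{coh}\mathbb{X}$ is hereditary abelian with Serre duality and AR translation $\tau$. The Euler form on $K_0(\mathcal{H})$ is $\langle[X],[Y]\rangle=\dim_k\operatorname{Hom}(X,Y)-\dim_k\operatorname{Ext}^1(X,Y)$; it is nondegenerate with Gram matrix of determinant $\pm1$. The Coxeter transformation $\Phi$ is the automorphism of $K_0(\mathcal{H})$ with $\Phi[X]=[\tau X]$. $L$ is the structure sheaf, $a=[L]$, $S_0$ a simple sheaf in a homogeneous (rank one) tube, $s_0=[S_0]$. The rank is $\operatorname{rk}(x)=\langle x,s_0\rangle$ and the degree is $\deg(x)=\sum_{j=0}^{p-1}\langle\Phi^ja,\,x-\operatorname{rk}(x)a\rangle$ with $p=\operatorname{lcm}(p_1,\ldots,p_t)$. *)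

theory Defs
  imports Main
begin

text \<open>
  Model of the Grothendieck group K_0(coh X) of a weighted projective line X of
  weight type ps = [p_1,...,p_t] (all p_i >= 2), via the canonical tilting bundle
  T = direct sum of the line bundles O(u), 0 <= u <= c (Geigle--Lenzing).
  The classes [O(u)] form a Z-basis of K_0; they are indexed by
    LZero   ~ O          (u = 0),
    LPt i l ~ O(l x_i)   (i < t, 1 <= l <= p_i - 1),
    LC      ~ O(c)       (u = c).
  Since T is tilting, Ext^1 vanishes between these, so the Euler form on basis
  elements is dim Hom(O(u),O(v)) = dim S_(v-u) (S the graded coordinate ring).
\<close>

datatype lidx = LZero | LPt nat nat | LC

definition lidx_set :: "nat list \<Rightarrow> lidx set" where
  "lidx_set ps = {LZero, LC} \<union> {LPt i l | i l. i < length ps \<and> 1 \<le> l \<and> l < ps ! i}"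

fun homdim :: "lidx \<Rightarrow> lidx \<Rightarrow> int" where
  "homdim LZero LZero = 1"
| "homdim LZero (LPt i l) = 1"
| "homdim LZero LC = 2"
| "homdim (LPt i l) (LPt j m) = (if i = j \<and> l \<le> m then 1 else 0)"
| "homdim (LPt i l) LC = 1"
| "homdim (LPt i l) LZero = 0"
| "homdim LC LC = 1"
| "homdim LC _ = 0"

definition K0 :: "nat list \<Rightarrow> (lidx \<Rightarrow> int) set" where
  "K0 ps = {x. \<forall>u. u \<notin> lidx_set ps \<longrightarrow> x u = 0}"

definition euler :: "nat list \<Rightarrow> (lidx \<Rightarrow> int) \<Rightarrow> (lidx \<Rightarrow> int) \<Rightarrow> int" where
  "euler ps x y = (\<Sum>u\<in>lidx_set ps. \<Sum>v\<in>lidx_set ps. x u * y v * homdim u v)"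

text \<open>Coxeter transformation Phi[X] = [tau X], determined by Serre duality
  <x,y> = - <y, Phi x> (Ext^1(X,Y) = D Hom(Y, tau X)).\<close>
definition Phi :: "nat list \<Rightarrow> (lidx \<Rightarrow> int) \<Rightarrow> (lidx \<Rightarrow> int)" where
  "Phi ps x = (THE z. z \<in> K0 ps \<and> (\<forall>w\<in>K0 ps. euler ps w z = - euler ps x w))"

text \<open>a = [O], s_0 = [S_0] where 0 -> O -> O(c) -> S_0 -> 0 for a homogeneous point.\<close>
definition cls_a :: "lidx \<Rightarrow> int" where
  "cls_a = (\<lambda>u. if u = LZero then 1 else 0)"

definition cls_s0 :: "lidx \<Rightarrow> int" where
  "cls_s0 = (\<lambda>u. if u = LC then 1 else if u = LZero then -1 else 0)"

definition rk :: "nat list \<Rightarrow> (lidx \<Rightarrow> int) \<Rightarrow> int" where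
  "rk ps x = euler ps x cls_s0"

definition deg :: "nat list \<Rightarrow> (lidx \<Rightarrow> int) \<Rightarrow> int" where
  "deg ps x = (\<Sum>j<Lcm (set ps).
      euler ps ((Phi ps ^^ j) cls_a) (\<lambda>u. x u - rk ps x * cls_a u))"

end

theory Submission
  imports Defs
begin

text \<open>
  The Cartan matrix of the tilting bundle is invertible over \<open>\<int>\<close>, so \<open>\<Phi>\<close> is the unique map
  with \<open>\<langle>w, \<Phi> x\<rangle> = - \<langle>x, w\<rangle>\<close>. This Serre duality turns both \<open>\<lambda> \<circ> (1 + \<Phi>) = 0\<close> and
  \<open>\<Phi> y = - y\<close> into the symmetry \<open>\<langle>w, y\<rangle> = \<langle>y, w\<rangle>\<close> for all \<open>w\<close>.
  As \<open>\<Phi>\<close> fixes \<open>s\<^sub>0\<close>, \<open>rk y = \<langle>y, \<Phi> s\<^sub>0\<rangle> = - \<langle>s\<^sub>0, y\<rangle> = - rk y\<close>.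
  As \<open>\<Phi>\<close> is an isometry, \<open>\<langle>\<Phi>\<^sup>j a, y\<rangle> = (-1)\<^sup>j \<langle>a, y\<rangle>\<close>, so \<open>deg y\<close> vanishes for even \<open>p\<close>.
  For odd \<open>p\<close> all weights are odd, and the symmetry of \<open>\<langle>-, y\<rangle>\<close> makes the coordinates
  of \<open>y\<close> along each arm alternate in sign, so they sum to zero and \<open>\<langle>a, y\<rangle> = 0\<close>.
\<close>

lemma mem_lidx_set [simp]:
  "LZero \<in> lidx_set ps" "LC \<in> lidx_set ps"
  "LPt i l \<in> lidx_set ps \<longleftrightarrow> i < length ps \<and> 1 \<le> l \<and> l < ps ! i"
  by (auto simp: lidx_set_def)

lemma lidx_set_eq:
  "lidx_set ps = insert LZero (insert LC ((\<lambda>(i, l). LPt i l) ` (SIGMA i:{..<length ps}. {1..<ps ! i})))"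
  by (auto simp: lidx_set_def)

lemma finite_lidx_set [simp]: "finite (lidx_set ps)"
  by (simp add: lidx_set_eq)

lemma sum_lidx_set:
  "(\<Sum>u\<in>lidx_set ps. f u) = f LZero + f LC + (\<Sum>i<length ps. \<Sum>l = 1..<ps ! i. f (LPt i l))"
proof -
  have "inj_on (\<lambda>(i, l). LPt i l) (SIGMA i:{..<length ps}. {1..<ps ! i})"
    by (auto simp: inj_on_def)
  then have "(\<Sum>u\<in>(\<lambda>(i, l). LPt i l) ` (SIGMA i:{..<length ps}. {1..<ps ! i}). f u)
      = (\<Sum>i<length ps. \<Sum>l = 1..<ps ! i. f (LPt i l))"
    by (subst sum.reindex) (auto simp: sum.Sigma case_prod_beta)
  then show ?thesis
    by (simp add: lidx_set_eq image_iff add.assoc)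
qed

lemma sum_diff_Suc_atLeastLessThan:
  fixes f :: "nat \<Rightarrow> 'a::ab_group_add"
  assumes "l \<le> q"
  shows "(\<Sum>m = l..<q. f m - f (Suc m)) = f l - f q"
  using sum_Suc_diff'[OF assms, of "\<lambda>m. - f m"] by simp

definition cartan :: "nat list \<Rightarrow> (lidx \<Rightarrow> int) \<Rightarrow> lidx \<Rightarrow> int" where
  "cartan ps z u = (if u \<in> lidx_set ps then \<Sum>v\<in>lidx_set ps. homdim u v * z v else 0)"

definition cartan_transp :: "nat list \<Rightarrow> (lidx \<Rightarrow> int) \<Rightarrow> lidx \<Rightarrow> int" where
  "cartan_transp ps x v = (if v \<in> lidx_set ps then \<Sum>u\<in>lidx_set ps. x u * homdim u v else 0)"

lemma cartan_LC: "cartan ps z LC = z LC"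
  by (simp add: cartan_def sum_lidx_set)

lemma cartan_LZero:
  "cartan ps z LZero = z LZero + 2 * z LC + (\<Sum>i<length ps. \<Sum>m = 1..<ps ! i. z (LPt i m))"
  by (simp add: cartan_def sum_lidx_set)

lemma cartan_LPt:
  assumes "LPt i l \<in> lidx_set ps"
  shows "cartan ps z (LPt i l) = z LC + (\<Sum>m = l..<ps ! i. z (LPt i m))"
proof -
  have "(\<Sum>j<length ps. \<Sum>m = 1..<ps ! j. homdim (LPt i l) (LPt j m) * z (LPt j m))
      = (\<Sum>j<length ps. if j = i then \<Sum>m = 1..<ps ! j. if l \<le> m then z (LPt j m) else 0 else 0)"
    by (intro sum.cong) (auto intro!: sum.cong)
  also have "\<dots> = (\<Sum>m = 1..<ps ! i. if l \<le> m then z (LPt i m) else 0)"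
    using assms by simp
  also have "\<dots> = (\<Sum>m\<in>{m \<in> {1..<ps ! i}. l \<le> m}. z (LPt i m))"
    by (rule sum.inter_filter[symmetric]) simp
  also have "{m \<in> {1..<ps ! i}. l \<le> m} = {l..<ps ! i}" using assms by auto
  finally have "(\<Sum>j<length ps. \<Sum>m = 1..<ps ! j. homdim (LPt i l) (LPt j m) * z (LPt j m))
      = (\<Sum>m = l..<ps ! i. z (LPt i m))"
    using assms by simp
  with assms show ?thesis by (simp add: cartan_def sum_lidx_set)
qed

lemma cartan_transp_LZero: "cartan_transp ps x LZero = x LZero"
  by (simp add: cartan_transp_def sum_lidx_set)

lemma cartan_transp_LC:
  "cartan_transp ps x LC = 2 * x LZero + x LC + (\<Sum>i<length ps. \<Sum>m = 1..<ps ! i. x (LPt i m))"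
  by (simp add: cartan_transp_def sum_lidx_set)

lemma cartan_transp_LPt:
  assumes "LPt i l \<in> lidx_set ps"
  shows "cartan_transp ps x (LPt i l) = x LZero + (\<Sum>m = 1..l. x (LPt i m))"
proof -
  have "(\<Sum>j<length ps. \<Sum>m = 1..<ps ! j. x (LPt j m) * homdim (LPt j m) (LPt i l))
      = (\<Sum>j<length ps. if j = i then \<Sum>m = 1..<ps ! j. if m \<le> l then x (LPt j m) else 0 else 0)"
    by (intro sum.cong) (auto intro!: sum.cong)
  also have "\<dots> = (\<Sum>m = 1..<ps ! i. if m \<le> l then x (LPt i m) else 0)"
    using assms by simp
  also have "\<dots> = (\<Sum>m\<in>{m \<in> {1..<ps ! i}. m \<le> l}. x (LPt i m))"
    by (rule sum.inter_filter[symmetric]) simp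
  also have "{m \<in> {1..<ps ! i}. m \<le> l} = {1..l}" using assms by auto
  finally show ?thesis using assms by (simp add: cartan_transp_def sum_lidx_set)
qed

lemma cartan_transp_in_K0: "cartan_transp ps x \<in> K0 ps"
  by (simp add: K0_def cartan_transp_def)

text \<open>The line bundles on the \<open>i\<close>-th arm, continued by \<open>O(c) = O(p\<^sub>i x\<^sub>i)\<close> at \<open>l = p\<^sub>i\<close>.\<close>
definition arm :: "nat list \<Rightarrow> (lidx \<Rightarrow> int) \<Rightarrow> nat \<Rightarrow> nat \<Rightarrow> int" where
  "arm ps b i l = (if l < ps ! i then b (LPt i l) else b LC)"

definition cartan_inv :: "nat list \<Rightarrow> (lidx \<Rightarrow> int) \<Rightarrow> lidx \<Rightarrow> int" where
  "cartan_inv ps b u = (case u of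
       LZero \<Rightarrow> b LZero - 2 * b LC - (\<Sum>i<length ps. arm ps b i 1 - b LC)
     | LC \<Rightarrow> b LC
     | LPt i l \<Rightarrow> if LPt i l \<in> lidx_set ps then arm ps b i l - arm ps b i (Suc l) else 0)"

lemma cartan_inv_LC [simp]: "cartan_inv ps b LC = b LC"
  by (simp add: cartan_inv_def)

lemma cartan_inv_in_K0: "cartan_inv ps b \<in> K0 ps"
  by (auto simp: K0_def cartan_inv_def split: lidx.split)

lemma arm_cartan:
  assumes "i < length ps" "1 \<le> l" "l \<le> ps ! i"
  shows "arm ps (cartan ps z) i l = z LC + (\<Sum>m = l..<ps ! i. z (LPt i m))"
  using assms by (cases "l < ps ! i") (auto simp: arm_def cartan_LPt cartan_LC)

lemma sum_arm_cartan_inv: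
  assumes "i < length ps" "1 \<le> l" "l \<le> ps ! i"
  shows "(\<Sum>m = l..<ps ! i. cartan_inv ps b (LPt i m)) = arm ps b i l - b LC"
proof -
  have "(\<Sum>m = l..<ps ! i. cartan_inv ps b (LPt i m))
      = (\<Sum>m = l..<ps ! i. arm ps b i m - arm ps b i (Suc m))"
    using assms by (intro sum.cong) (auto simp: cartan_inv_def)
  also have "\<dots> = arm ps b i l - arm ps b i (ps ! i)"
    using assms by (simp add: sum_diff_Suc_atLeastLessThan)
  finally show ?thesis by (simp add: arm_def)
qed

lemma cartan_inv_cartan:
  assumes "z \<in> K0 ps"
  shows "cartan_inv ps (cartan ps z) = z"
proof
  fix u
  show "cartan_inv ps (cartan ps z) u = z u"
  proof (cases u)
    case LZero
    have "arm ps (cartan ps z) i 1 - cartan ps z LC = (\<Sum>m = 1..<ps ! i. z (LPt i m))"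
      if "i < length ps" for i
    proof (cases "ps ! i = 0")
      case False
      with that show ?thesis by (simp add: arm_cartan cartan_LC)
    qed (simp add: arm_def cartan_LC)
    then show ?thesis
      using LZero by (simp add: cartan_inv_def cartan_LZero cartan_LC)
  next
    case (LPt i l)
    then show ?thesis
      using assms by (auto simp: cartan_inv_def arm_cartan sum.atLeast_Suc_lessThan K0_def)
  qed (simp add: cartan_LC)
qed

lemma cartan_cartan_inv:
  assumes "b \<in> K0 ps"
  shows "cartan ps (cartan_inv ps b) = b"
proof
  fix u
  show "cartan ps (cartan_inv ps b) u = b u"
  proof (cases "u \<in> lidx_set ps")
    case True
    show ?thesis
    proof (cases u)
      case LZero
      have "(\<Sum>m = 1..<ps ! i. cartan_inv ps b (LPt i m)) = arm ps b i 1 - b LC"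
        if "i < length ps" for i
      proof (cases "ps ! i = 0")
        case False
        with that show ?thesis by (simp add: sum_arm_cartan_inv)
      qed (simp add: arm_def)
      then show ?thesis
        using LZero by (simp add: cartan_LZero cartan_inv_def)
    next
      case (LPt i l)
      with True have "l \<le> ps ! i" "i < length ps" "1 \<le> l" by auto
      with LPt True show ?thesis by (simp add: cartan_LPt sum_arm_cartan_inv arm_def)
    qed (simp add: cartan_LC)
  qed (use assms in \<open>simp add: cartan_def K0_def\<close>)
qed

lemma euler_eq_sum_cartan: "euler ps x y = (\<Sum>u\<in>lidx_set ps. x u * cartan ps y u)"
  unfolding euler_def cartan_def by (auto simp: sum_distrib_left mult_ac intro!: sum.cong)

lemma euler_eq_sum_cartan_transp: "euler ps x y = (\<Sum>v\<in>lidx_set ps. cartan_transp ps x v * y v)"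
  unfolding euler_def cartan_transp_def
  by (subst sum.swap) (auto simp: sum_distrib_left sum_distrib_right mult_ac intro!: sum.cong)

lemma euler_add_right: "euler ps x (\<lambda>u. y u + z u) = euler ps x y + euler ps x z"
  unfolding euler_def by (simp add: algebra_simps sum.distrib)

lemma euler_uminus_right: "euler ps x (\<lambda>u. - y u) = - euler ps x y"
  unfolding euler_def by (simp add: sum_negf)

definition basis_vec :: "lidx \<Rightarrow> lidx \<Rightarrow> int" where
  "basis_vec u = (\<lambda>v. if v = u then 1 else 0)"

lemma basis_vec_in_K0: "u \<in> lidx_set ps \<Longrightarrow> basis_vec u \<in> K0 ps"
  by (auto simp: K0_def basis_vec_def)

lemma euler_basis_vec_left: "u \<in> lidx_set ps \<Longrightarrow> euler ps (basis_vec u) y = cartan ps y u"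
  by (simp add: euler_eq_sum_cartan basis_vec_def if_distrib[of "\<lambda>a. a * _"] cong: if_cong)

lemma euler_basis_vec_right: "v \<in> lidx_set ps \<Longrightarrow> euler ps x (basis_vec v) = cartan_transp ps x v"
  by (simp add: euler_eq_sum_cartan_transp basis_vec_def if_distrib[of "\<lambda>a. _ * a"] cong: if_cong)

lemma cartan_eqI:
  assumes "\<forall>w\<in>K0 ps. euler ps w y = euler ps w z"
  shows "cartan ps y = cartan ps z"
proof
  fix u
  show "cartan ps y u = cartan ps z u"
    using assms basis_vec_in_K0[of u ps] euler_basis_vec_left[of u ps]
    by (cases "u \<in> lidx_set ps") (auto simp: cartan_def)
qed

lemma euler_nondegenerate:
  assumes "y \<in> K0 ps" "z \<in> K0 ps" "\<forall>w\<in>K0 ps. euler ps w y = euler ps w z"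
  shows "y = z"
  by (metis assms cartan_eqI cartan_inv_cartan)

lemma euler_cartan_inv_right:
  "b \<in> K0 ps \<Longrightarrow> euler ps w (cartan_inv ps b) = (\<Sum>u\<in>lidx_set ps. w u * b u)"
  by (simp add: euler_eq_sum_cartan cartan_cartan_inv)

lemma serre_dual_ex1: "\<exists>!z. z \<in> K0 ps \<and> (\<forall>w\<in>K0 ps. euler ps w z = - euler ps x w)"
proof (rule ex_ex1I)
  let ?z = "cartan_inv ps (\<lambda>u. - cartan_transp ps x u)"
  have "(\<lambda>u. - cartan_transp ps x u) \<in> K0 ps"
    using cartan_transp_in_K0 by (simp add: K0_def)
  then have "euler ps w ?z = - euler ps x w" for w
    by (simp add: euler_cartan_inv_right euler_eq_sum_cartan_transp[of ps x w] sum_negf mult_ac)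
  then show "\<exists>z. z \<in> K0 ps \<and> (\<forall>w\<in>K0 ps. euler ps w z = - euler ps x w)"
    using cartan_inv_in_K0 by blast
qed (auto intro: euler_nondegenerate)

lemma Phi_in_K0: "Phi ps x \<in> K0 ps"
  and euler_Phi_right: "w \<in> K0 ps \<Longrightarrow> euler ps w (Phi ps x) = - euler ps x w"
  using theI'[OF serre_dual_ex1[of ps x]] by (simp_all add: Phi_def)

lemma Phi_eqI: "z \<in> K0 ps \<Longrightarrow> \<forall>w\<in>K0 ps. euler ps w z = - euler ps x w \<Longrightarrow> Phi ps x = z"
  unfolding Phi_def using serre_dual_ex1[of ps x] by (simp add: the1_equality)

lemma euler_Phi_Phi: "y \<in> K0 ps \<Longrightarrow> euler ps (Phi ps x) (Phi ps y) = euler ps x y"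
  by (simp add: euler_Phi_right Phi_in_K0)

lemma Phi_eq_uminus_iff:
  assumes "y \<in> K0 ps"
  shows "Phi ps y = (\<lambda>u. - y u) \<longleftrightarrow> (\<forall>w\<in>K0 ps. euler ps w y = euler ps y w)"
proof
  assume "Phi ps y = (\<lambda>u. - y u)"
  then show "\<forall>w\<in>K0 ps. euler ps w y = euler ps y w"
    using euler_Phi_right[of _ ps y] by (simp add: euler_uminus_right)
next
  assume "\<forall>w\<in>K0 ps. euler ps w y = euler ps y w"
  moreover have "(\<lambda>u. - y u) \<in> K0 ps" using assms by (simp add: K0_def)
  ultimately show "Phi ps y = (\<lambda>u. - y u)"
    by (simp add: Phi_eqI euler_uminus_right)
qed

lemma euler_one_plus_Phi_eq_zero_iff:
  assumes "y \<in> K0 ps"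
  shows "(\<forall>x\<in>K0 ps. euler ps y (\<lambda>u. x u + Phi ps x u) = 0)
    \<longleftrightarrow> (\<forall>w\<in>K0 ps. euler ps w y = euler ps y w)"
  using assms by (auto simp: euler_add_right euler_Phi_right)

lemma cls_s0_in_K0: "cls_s0 \<in> K0 ps"
  by (simp add: K0_def cls_s0_def)

lemma Phi_cls_s0: "Phi ps cls_s0 = cls_s0"
proof (rule Phi_eqI[OF cls_s0_in_K0], intro ballI)
  fix w
  have "euler ps w cls_s0 = cartan_transp ps w LC - cartan_transp ps w LZero"
    by (simp add: euler_eq_sum_cartan_transp sum_lidx_set cls_s0_def)
  moreover have "euler ps cls_s0 w = cartan ps w LC - cartan ps w LZero"
    by (simp add: euler_eq_sum_cartan sum_lidx_set cls_s0_def)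
  ultimately show "euler ps w cls_s0 = - euler ps cls_s0 w"
    by (simp add: cartan_LC cartan_LZero cartan_transp_LC cartan_transp_LZero)
qed

lemma rk_eq_zero_if_Phi_eq_uminus:
  assumes "y \<in> K0 ps" "Phi ps y = (\<lambda>u. - y u)"
  shows "rk ps y = 0"
proof -
  have "rk ps y = euler ps y (Phi ps cls_s0)"
    by (simp add: rk_def Phi_cls_s0)
  also have "\<dots> = - euler ps cls_s0 y"
    using assms(1) by (rule euler_Phi_right)
  also have "\<dots> = - rk ps y"
    using assms cls_s0_in_K0 by (simp add: Phi_eq_uminus_iff rk_def)
  finally show ?thesis by simp
qed

lemma euler_funpow_Phi_left:
  assumes "y \<in> K0 ps" "Phi ps y = (\<lambda>u. - y u)"
  shows "euler ps ((Phi ps ^^ j) x) y = (- 1) ^ j * euler ps x y"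
proof (induction j)
  case (Suc j)
  have "euler ps (Phi ps ((Phi ps ^^ j) x)) y = - euler ps (Phi ps ((Phi ps ^^ j) x)) (Phi ps y)"
    using assms(2) by (simp add: euler_uminus_right)
  also have "\<dots> = - euler ps ((Phi ps ^^ j) x) y"
    using assms(1) by (simp add: euler_Phi_Phi)
  finally show ?case using Suc.IH by simp
qed simp

lemma cartan_eq_cartan_transp_if_Phi_eq_uminus:
  assumes "y \<in> K0 ps" "Phi ps y = (\<lambda>u. - y u)"
  shows "cartan ps y u = cartan_transp ps y u"
  using assms basis_vec_in_K0[of u ps] euler_basis_vec_left[of u ps] euler_basis_vec_right[of u ps]
  by (cases "u \<in> lidx_set ps") (auto simp: Phi_eq_uminus_iff cartan_def cartan_transp_def)

lemma anti_invariant_corners: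
  assumes "y \<in> K0 ps" "Phi ps y = (\<lambda>u. - y u)"
  shows "2 * y LZero + (\<Sum>i<length ps. \<Sum>m = 1..<ps ! i. y (LPt i m)) = 0"
    and "y LC = y LZero"
  using cartan_eq_cartan_transp_if_Phi_eq_uminus[OF assms, of LC]
    cartan_eq_cartan_transp_if_Phi_eq_uminus[OF assms, of LZero]
  by (simp_all add: cartan_LC cartan_LZero cartan_transp_LC cartan_transp_LZero)

lemma anti_invariant_arm:
  assumes "y \<in> K0 ps" "Phi ps y = (\<lambda>u. - y u)" "LPt i l \<in> lidx_set ps"
  shows "(\<Sum>m = l..<ps ! i. y (LPt i m)) = (\<Sum>m = 1..l. y (LPt i m))"
  using cartan_eq_cartan_transp_if_Phi_eq_uminus[OF assms(1,2), of "LPt i l"]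
    anti_invariant_corners(2)[OF assms(1,2)] assms(3)
  by (simp add: cartan_LPt cartan_transp_LPt)

lemma sum_eq_zero_if_suffix_sums_eq_prefix_sums:
  fixes Y :: "nat \<Rightarrow> 'a::ab_group_add"
  assumes "odd q" and suffix_eq_prefix: "\<And>l. 1 \<le> l \<Longrightarrow> l < q \<Longrightarrow> sum Y {l..<q} = sum Y {1..l}"
  shows "sum Y {1..<q} = 0"
proof -
  have pair: "Y l + Y (Suc l) = 0" if "1 \<le> l" "Suc l < q" for l
  proof -
    have "sum Y {l..<q} = Y l + sum Y {Suc l..<q}"
      using that by (simp add: sum.atLeast_Suc_lessThan)
    moreover have "sum Y {1..Suc l} = sum Y {1..l} + Y (Suc l)"
      using that by simp
    ultimately show ?thesis
      using suffix_eq_prefix[of l] suffix_eq_prefix[of "Suc l"] that by (simp add: algebra_simps)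
  qed
  have "sum Y {1..<2 * n + 1} = 0" if "2 * n + 1 \<le> q" for n
    using that
  proof (induction n)
    case (Suc n)
    have "sum Y {1..<2 * Suc n + 1} = sum Y {1..<2 * n + 1} + (Y (2 * n + 1) + Y (Suc (2 * n + 1)))"
      by (simp add: sum.atLeastLessThan_Suc add.assoc)
    with Suc show ?case using pair[of "2 * n + 1"] by simp
  qed simp
  moreover obtain n where "q = 2 * n + 1" using \<open>odd q\<close> oddE by blast
  ultimately show ?thesis by simp
qed

lemma euler_cls_a_eq_zero_if_odd:
  assumes "y \<in> K0 ps" "Phi ps y = (\<lambda>u. - y u)" "odd (Lcm (set ps))"
  shows "euler ps cls_a y = 0"
proof -
  have "(\<Sum>m = 1..<ps ! i. y (LPt i m)) = 0" if "i < length ps" for i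
  proof (rule sum_eq_zero_if_suffix_sums_eq_prefix_sums)
    have "ps ! i dvd Lcm (set ps)"
      using that by (simp add: dvd_Lcm)
    then show "odd (ps ! i)"
      using assms(3) dvd_trans by blast
  next
    fix l assume "1 \<le> l" "l < ps ! i"
    with that show "(\<Sum>m = l..<ps ! i. y (LPt i m)) = (\<Sum>m = 1..l. y (LPt i m))"
      by (simp add: anti_invariant_arm[OF assms(1,2)])
  qed
  then have "y LZero = 0"
    using anti_invariant_corners(1)[OF assms(1,2)] by simp
  moreover have "euler ps cls_a y = cartan ps y LZero"
    by (simp add: euler_eq_sum_cartan sum_lidx_set cls_a_def)
  ultimately show ?thesis
    using anti_invariant_corners[OF assms(1,2)] by (simp add: cartan_LZero)
qed

lemma sum_neg_one_power_even:
  assumes "even n"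
  shows "(\<Sum>j<n. (- 1 :: 'a::ring_1) ^ j) = 0"
proof -
  obtain k where "n = 2 * k" using assms by blast
  moreover have "(\<Sum>j<2 * k. (- 1 :: 'a) ^ j) = 0"
    by (induction k) (simp_all add: sum.lessThan_Suc)
  ultimately show ?thesis by simp
qed

lemma deg_eq_zero_if_Phi_eq_uminus:
  assumes "y \<in> K0 ps" "Phi ps y = (\<lambda>u. - y u)"
  shows "deg ps y = 0"
proof -
  have "deg ps y = (\<Sum>j<Lcm (set ps). (- 1) ^ j) * euler ps cls_a y"
    by (simp add: deg_def rk_eq_zero_if_Phi_eq_uminus[OF assms] euler_funpow_Phi_left[OF assms]
        sum_distrib_right)
  then show ?thesis
    using sum_neg_one_power_even euler_cls_a_eq_zero_if_odd[OF assms]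
    by (cases "even (Lcm (set ps))") auto
qed

theorem lemma3p8:
  fixes ps :: "nat list" and y :: "lidx \<Rightarrow> int"
  assumes "\<forall>q\<in>set ps. 2 \<le> q"
    and "y \<in> K0 ps"
  shows "((\<forall>x\<in>K0 ps. euler ps y (\<lambda>u. x u + Phi ps x u) = 0)
            \<longleftrightarrow> Phi ps y = (\<lambda>u. - y u))
         \<and> (Phi ps y = (\<lambda>u. - y u) \<longrightarrow> rk ps y = 0 \<and> deg ps y = 0)"
  using euler_one_plus_Phi_eq_zero_iff[OF assms(2)] Phi_eq_uminus_iff[OF assms(2)]
    rk_eq_zero_if_Phi_eq_uminus[OF assms(2)] deg_eq_zero_if_Phi_eq_uminus[OF assms(2)]
  by simp

end
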